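(* Let $\omega\in\mathbb{R}^d$ be rationally independent, let $U:\mathbb{T}^d\to Gl(n,\mathbb{C})$ be continuous and let $B\in\mathcal{M}(n,\mathbb{C})$ be in Jordan normal form with $\partial_\omega U=BU-U\bar B$. Then every $x\in\sigma(B)$ is linked to some $y\in\sigma(B)$. Moreover, for every $\alpha\in\sigma(B)$, if the chain-linked equivalence class $[\alpha]\subseteq\sigma(B)$ contains no loop of odd length, then there is a partition $[\alpha]=\Sigma_1\cup\Sigma_2$ such that every element of $\Sigma_1$ is linked to every element of $\Sigma_2$, and the sum of the algebraic multiplicities of the eigenvalues in $\Sigma_1$ equals the sum of the algebraic multiplicities of the eigenvalues in $\Sigma_2$.
   Context: $\mathbb{T}^d=\mathbb{R}^d/\mathbb{Z}^d$; rationally independent: $\langle k,\omega\rangle\ne0$ for $k\in\mathbb{Z}^d\setminus\{0\}$. $\partial_\omega U(\theta)=\frac{d}{dt}U(\theta+t\omega)|_{t=0}$; $\bar B$ entrywise conjugate. Let $\mathcal{M}=\{2i\pi\langle k,\omega\rangle:k\in\mathbb{Z}^d\}$. Two complex numbers $\alpha,\beta$ are linked if $\alpha-\bar\beta\in\mathcal{M}$. A chain of length $k-1$ is a sequence $\alpha_{i_1},\dots,\alpha_{i_k}$ with $\alpha_{i_j}$ linked to $\alpha_{i_{j+1}}$ for all $j$; it is a loop of length $k-1$ if moreover $k\ge2$ and $\alpha_{i_k}=\alpha_{i_1}$. Two numbers are chain-linked if there is a chain between them; on $\sigma(B)$ (given the first conclusion) this is an equivalence relation, and $[\alpha]$ denotes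 the class of $\alpha$. *)

theory Defs
  imports "HOL-Analysis.Analysis" "Jordan_Normal_Form.Jordan_Normal_Form"
begin

text \<open>Points of \<real>^d are functions 'd \<Rightarrow> real on a finite index type 'd (product topology);
  functions on the torus T^d are Z^d-periodic functions on \<real>^d.\<close>

definition rat_indep :: "('d::finite \<Rightarrow> real) \<Rightarrow> bool" where
  "rat_indep \<omega> \<longleftrightarrow> (\<forall>k::'d \<Rightarrow> int. k \<noteq> (\<lambda>_. 0) \<longrightarrow> (\<Sum>i\<in>UNIV. of_int (k i) * \<omega> i) \<noteq> 0)"

definition Mset :: "('d::finite \<Rightarrow> real) \<Rightarrow> complex set" where
  "Mset \<omega> = {2 * \<i> * complex_of_real pi * complex_of_real (\<Sum>i\<in>UNIV. of_int (k i) * \<omega> i) | k :: 'd \<Rightarrow> int. True}"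

definition linked :: "('d::finite \<Rightarrow> real) \<Rightarrow> complex \<Rightarrow> complex \<Rightarrow> bool" where
  "linked \<omega> a b \<longleftrightarrow> a - cnj b \<in> Mset \<omega>"

text \<open>A chain of length (length xs - 1): consecutive entries are linked.\<close>
definition is_chain :: "('d::finite \<Rightarrow> real) \<Rightarrow> complex list \<Rightarrow> bool" where
  "is_chain \<omega> xs \<longleftrightarrow> xs \<noteq> [] \<and> (\<forall>j. Suc j < length xs \<longrightarrow> linked \<omega> (xs ! j) (xs ! Suc j))"

definition is_loop :: "('d::finite \<Rightarrow> real) \<Rightarrow> complex list \<Rightarrow> bool" where
  "is_loop \<omega> xs \<longleftrightarrow> is_chain \<omega> xs \<and> length xs \<ge> 2 \<and> last xs = hd xs"

definition chain_linked :: "('d::finite \<Rightarrow> real) \<Rightarrow> complex set \<Rightarrow> complex \<Rightarrow> complex \<Rightarrow> bool" where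
  "chain_linked \<omega> S a b \<longleftrightarrow> (\<exists>xs. is_chain \<omega> xs \<and> set xs \<subseteq> S \<and> hd xs = a \<and> last xs = b)"

definition spectrum :: "complex mat \<Rightarrow> complex set" where
  "spectrum B = {a. eigenvalue B a}"

definition alg_mult :: "complex mat \<Rightarrow> complex \<Rightarrow> nat" where
  "alg_mult B a = order a (char_poly B)"

definition chain_class :: "('d::finite \<Rightarrow> real) \<Rightarrow> complex mat \<Rightarrow> complex \<Rightarrow> complex set" where
  "chain_class \<omega> B a = {b \<in> spectrum B. chain_linked \<omega> (spectrum B) a b}"

definition in_jordan_nf :: "complex mat \<Rightarrow> bool" where
  "in_jordan_nf B \<longleftrightarrow> (\<exists>n_as. 0 \<notin> fst ` set n_as \<and> B = jordan_matrix n_as)"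

end

theory Submission
  imports Defs
begin

text \<open>A continuous eigenfunction \<open>f \<noteq> 0\<close> of \<open>\<partial>\<^sub>\<omega>\<close> on the torus with eigenvalue \<open>\<mu>\<close> has
  constant modulus along the (dense) orbits of the flow, hence nowhere vanishes and has a
  continuous logarithm \<open>H\<close>; comparing the periodicity of \<open>H\<close> with its linear growth along
  the flow gives \<open>\<mu> = \<Sum>\<^sub>i a\<^sub>i \<omega>\<^sub>i\<close> with \<open>a\<^sub>i \<in> 2\<pi>i\<int>\<close>, i.e. \<open>\<mu> \<in> \<M>\<close>.
  Because \<open>B\<close> is in Jordan normal form, each entry \<open>U\<^sub>i\<^sub>j\<close> whose diagonal entries
  \<open>B\<^sub>i\<^sub>i\<close>, \<open>B\<^sub>j\<^sub>j\<close> are not linked is such an eigenfunction modulo entries already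
  known to vanish, so it vanishes too. Hence the invertible matrix \<open>U(0)\<close> only has nonzero
  entries at linked pairs of eigenvalues. A nonzero entry in each row gives the first claim.
  For the second, the rows of eigenvalues at even chain distance from \<open>\<alpha>\<close> are supported in
  the columns of those at odd distance and vice versa, so by invertibility both parts occupy
  equally many diagonal positions of \<open>B\<close>, i.e. carry the same algebraic multiplicity.\<close>

no_notation vec_index (infixl "$" 100)

section \<open>Kronecker approximation and periodic functions\<close>

lemma rat_indep_imp_inj:
  assumes "rat_indep \<omega>"
  shows "inj \<omega>"
proof (rule injI, rule ccontr)
  fix i j assume eq: "\<omega> i = \<omega> j" and "i \<noteq> j"
  define k :: "'a \<Rightarrow> int" where "k l = (if l = i then 1 else 0) - (if l = j then 1 else 0)" for l
  have "k \<noteq> (\<lambda>_. 0)"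
    using \<open>i \<noteq> j\<close> by (auto simp: k_def fun_eq_iff)
  moreover have "of_int (k l) * \<omega> l = (if l = i then \<omega> i else 0) - (if l = j then \<omega> j else 0)" for l
    by (simp add: k_def)
  then have "(\<Sum>l\<in>UNIV. of_int (k l) * \<omega> l) = 0"
    using eq by (simp add: sum_subtractf)
  ultimately show False
    using assms unfolding rat_indep_def by blast
qed

lemma rat_indep_Kronecker:
  fixes \<omega> \<alpha> :: "'d::finite \<Rightarrow> real"
  assumes indep: "rat_indep \<omega>" and "\<epsilon> > 0"
  obtains t and h :: "'d \<Rightarrow> int" where "\<And>i. \<bar>t * \<omega> i - of_int (h i) - \<alpha> i\<bar> < \<epsilon>"
proof -
  interpret Z: Modules.module "\<lambda>r. (*) (real_of_int r)"
    by (simp add: Modules.module.intro distrib_left mult.commute)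
  obtain e where e: "bij_betw e {..<CARD('d)} (UNIV :: 'd set)"
    using ex_bij_betw_nat_finite[of "UNIV :: 'd set"] by (auto simp: atLeast0LessThan)
  have inj: "inj \<omega>"
    by (rule rat_indep_imp_inj[OF indep])
  have "\<not> Z.dependent (range \<omega>)"
  proof
    assume "Z.dependent (range \<omega>)"
    then obtain u where u: "\<exists>v\<in>range \<omega>. u v \<noteq> 0" "(\<Sum>v\<in>range \<omega>. real_of_int (u v) * v) = 0"
      by (auto simp: Z.dependent_finite)
    then have "(\<Sum>l\<in>UNIV. of_int (u (\<omega> l)) * \<omega> l) = 0"
      by (simp add: sum.reindex[OF inj])
    moreover have "(\<lambda>l. u (\<omega> l)) \<noteq> (\<lambda>_. 0)"
      using u(1) by (auto simp: fun_eq_iff)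
    ultimately show False
      using indep unfolding rat_indep_def by blast
  qed
  moreover have "(\<omega> \<circ> e) ` {..<CARD('d)} = range \<omega>"
    using e by (metis bij_betw_imp_surj_on image_comp)
  moreover have "inj_on (\<omega> \<circ> e) {..<CARD('d)}"
    using e inj by (auto simp: bij_betw_def intro: comp_inj_on inj_on_subset)
  ultimately obtain t h where th: "\<And>j. j < CARD('d) \<Longrightarrow> \<bar>t * (\<omega> \<circ> e) j - of_int (h j) - (\<alpha> \<circ> e) j\<bar> < \<epsilon>"
    using Kronecker_thm_1[of "\<omega> \<circ> e" "CARD('d)" \<epsilon> "\<alpha> \<circ> e"] \<open>\<epsilon> > 0\<close> by metis
  have "\<bar>t * \<omega> i - of_int (h (inv_into {..<CARD('d)} e i)) - \<alpha> i\<bar> < \<epsilon>" for i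
    using th[of "inv_into {..<CARD('d)} e i"] bij_betw_inv_into[OF e] bij_betw_inv_into_right[OF e]
    by (auto dest: bij_betwE)
  then show thesis by (rule that)
qed

lemma periodic_Ints_if_periodic_axis:
  fixes g :: "real^'n \<Rightarrow> 'a"
  assumes per: "\<And>v i. g (v + axis i 1) = g v" and z: "\<And>i. z $ i \<in> \<int>"
  shows "g (v + z) = g v"
proof -
  have axis_multiple: "g (v + of_int m *\<^sub>R axis i 1) = g v" for v i m
  proof (induction m arbitrary: v rule: int_induct[where k = 0])
    case (step1 m)
    show ?case
      using step1.IH[of "v + axis i 1"] per[of v i] by (simp add: scaleR_left_distrib add_ac)
  next
    case (step2 m)
    have "v + of_int (m - 1) *\<^sub>R axis i 1 + axis i 1 = v + of_int m *\<^sub>R axis i 1"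
      by (simp add: scaleR_left_diff_distrib)
    then show ?case
      using step2.IH[of v] per[of "v + of_int (m - 1) *\<^sub>R axis i 1" i] by metis
  qed simp
  have "g (v + (\<Sum>i\<in>S. z $ i *\<^sub>R axis i 1)) = g v" for S
  proof (induction S arbitrary: v rule: infinite_finite_induct)
    case (insert i S)
    obtain m where "z $ i = of_int m"
      using z[of i] by (auto elim: Ints_cases)
    then show ?case
      using insert.IH[of "v + z $ i *\<^sub>R axis i 1"] axis_multiple[of v m i] insert.hyps
      by (simp add: add.assoc)
  qed simp_all
  from this[of UNIV] show ?thesis
    using basis_expansion[of z] by (simp add: scalar_mult_eq_scaleR)
qed

lemma periodic_bounded:
  fixes g :: "real^'n \<Rightarrow> 'a::real_normed_vector"
  assumes cont: "continuous_on UNIV g" and per: "\<And>v z. (\<And>i. z $ i \<in> \<int>) \<Longrightarrow> g (v + z) = g v"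
  obtains K where "\<And>v. norm (g v) \<le> K"
proof -
  have "compact (g ` cbox 0 1)"
    by (rule compact_continuous_image[OF continuous_on_subset[OF cont] compact_cbox]) simp
  then obtain K where K: "\<And>u. u \<in> cbox 0 1 \<Longrightarrow> norm (g u) \<le> K"
    by (meson bounded_iff compact_imp_bounded image_eqI)
  have "norm (g v) \<le> K" for v
  proof -
    define z :: "real^'n" where "z = (\<chi> i. of_int \<lfloor>v $ i\<rfloor>)"
    have "0 \<le> v $ i - of_int \<lfloor>v $ i\<rfloor> \<and> v $ i - of_int \<lfloor>v $ i\<rfloor> \<le> 1" for i
      using of_int_floor_le[of "v $ i"] real_of_int_floor_add_one_gt[of "v $ i"] by linarith
    then have "v - z \<in> cbox 0 1"
      by (simp add: z_def mem_box_cart)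
    have "g v = g ((v - z) + z)"
      by simp
    also have "\<dots> = g (v - z)"
      by (rule per) (simp add: z_def)
    finally show ?thesis
      using K[OF \<open>v - z \<in> cbox 0 1\<close>] by simp
  qed
  then show thesis by (rule that)
qed

section \<open>Eigenfunctions of the linear flow on the torus\<close>

lemma continuous_exp_eq_1_imp_eq_0:
  fixes g :: "'a::real_normed_vector \<Rightarrow> complex"
  assumes cont: "continuous_on UNIV g" and exp: "\<And>x. exp (g x) = 1" and "g 0 = 0"
  shows "g x = 0"
proof -
  have "g constant_on UNIV"
  proof (rule continuous_discrete_range_constant[OF connected_UNIV cont])
    fix x
    show "\<exists>e>0. \<forall>y. y \<in> UNIV \<and> g y \<noteq> g x \<longrightarrow> e \<le> norm (g y - g x)"
    proof (intro exI[of _ "2 * pi"] conjI allI impI)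
      fix y assume "y \<in> UNIV \<and> g y \<noteq> g x"
      moreover obtain m :: int where "g y = g x + of_int (2 * m) * pi * \<i>"
        using exp[of x] exp[of y] by (metis exp_eq)
      ultimately have "m \<noteq> 0" and "norm (g y - g x) = 2 * pi * \<bar>of_int m\<bar>"
        by (auto simp: norm_mult)
      then show "2 * pi \<le> norm (g y - g x)"
        by simp
    qed simp
  qed
  then show ?thesis
    using \<open>g 0 = 0\<close> by (metis UNIV_I constant_on_def)
qed

lemma bounded_ray_eq_0:
  fixes c :: "'a::real_normed_vector"
  assumes "\<And>t. norm (t *\<^sub>R c) \<le> K"
  shows "c = 0"
proof (rule ccontr)
  assume "c \<noteq> 0"
  then have "norm (((\<bar>K\<bar> + 1) / norm c) *\<^sub>R c) = \<bar>K\<bar> + 1"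
    by simp
  then show False
    using assms[of "(\<bar>K\<bar> + 1) / norm c"] by linarith
qed

lemma exp_flow_if_eigenfunction:
  fixes F :: "'a::real_normed_vector \<Rightarrow> complex"
  assumes deriv: "\<And>v. ((\<lambda>t. F (v + t *\<^sub>R w)) has_vector_derivative \<mu> * F v) (at 0)"
  shows "F (v + t *\<^sub>R w) = exp (\<mu> * of_real t) * F v"
proof -
  have deriv_at: "((\<lambda>s. F (v + s *\<^sub>R w)) has_vector_derivative \<mu> * F (v + s *\<^sub>R w)) (at s)" for s
  proof -
    have "((\<lambda>r. F ((v + s *\<^sub>R w) + r *\<^sub>R w)) \<circ> (\<lambda>r. r - s) has_vector_derivative
        1 *\<^sub>R (\<mu> * F (v + s *\<^sub>R w))) (at s)"
      by (rule vector_diff_chain_at) (auto intro!: derivative_eq_intros deriv)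
    moreover have "(\<lambda>r. F ((v + s *\<^sub>R w) + r *\<^sub>R w)) \<circ> (\<lambda>r. r - s) = (\<lambda>r. F (v + r *\<^sub>R w))"
      by (auto simp: fun_eq_iff algebra_simps)
    ultimately show ?thesis
      by simp
  qed
  define h where "h = (\<lambda>s. exp (- \<mu> * of_real s) * F (v + s *\<^sub>R w))"
  have "(h has_vector_derivative 0) (at s within UNIV)" for s
  proof -
    have "((\<lambda>s. exp (- \<mu> * of_real s)) has_vector_derivative - \<mu> * exp (- \<mu> * of_real s)) (at s)"
      by (rule has_vector_derivative_real_field) (auto intro!: derivative_eq_intros)
    from has_vector_derivative_mult[OF this deriv_at] show ?thesis
      by (simp add: h_def algebra_simps)
  qed
  then have "h t = h 0"
    using has_vector_derivative_zero_constant[OF convex_UNIV] by (metis UNIV_I)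
  then show ?thesis
    by (simp add: h_def exp_minus field_simps)
qed

lemma sum_in_Mset_if_exp_eq_1:
  fixes \<omega> :: "'d::finite \<Rightarrow> real"
  assumes "\<And>i. exp (a i) = 1"
  shows "(\<Sum>i\<in>UNIV. a i * of_real (\<omega> i)) \<in> Mset \<omega>"
proof -
  have "\<exists>k::int. a i = 2 * \<i> * of_real pi * of_int k" for i
  proof -
    obtain k :: int where "Re (a i) = 0" "Im (a i) = of_int (2 * k) * pi"
      using assms[of i] exp_eq_1 by blast
    then have "a i = 2 * \<i> * of_real pi * of_int k"
      by (simp add: complex_eq_iff)
    then show ?thesis ..
  qed
  then obtain k where "\<And>i. a i = 2 * \<i> * of_real pi * of_int (k i)"
    by metis
  then have "(\<Sum>i\<in>UNIV. a i * of_real (\<omega> i))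
      = 2 * \<i> * of_real pi * of_real (\<Sum>i\<in>UNIV. of_int (k i) * \<omega> i)"
    by (simp add: sum_distrib_left mult_ac)
  then show ?thesis
    unfolding Mset_def by blast
qed

locale torus_eigenfunction =
  fixes \<omega> :: "'d::finite \<Rightarrow> real" and F :: "real^'d \<Rightarrow> complex" and \<mu> :: complex
  assumes rat_indep: "rat_indep \<omega>"
    and continuous: "continuous_on UNIV F"
    and periodic: "\<And>v z. (\<And>i. z $ i \<in> \<int>) \<Longrightarrow> F (v + z) = F v"
    and eigenfunction: "\<And>v. ((\<lambda>t. F (v + t *\<^sub>R vec_lambda \<omega>)) has_vector_derivative \<mu> * F v) (at 0)"
begin

lemma flow: "F (v + t *\<^sub>R vec_lambda \<omega>) = exp (\<mu> * of_real t) * F v"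
  by (rule exp_flow_if_eigenfunction[OF eigenfunction])

lemma periodic_axis: "F (v + axis i 1) = F v"
  by (rule periodic) (simp add: axis_def)

lemma Re_eq_0:
  assumes "F v \<noteq> 0"
  shows "Re \<mu> = 0"
proof (rule ccontr)
  assume "Re \<mu> \<noteq> 0"
  obtain K where K: "\<And>u. norm (F u) \<le> K"
    using periodic_bounded[OF continuous periodic] by blast
  define t where "t = K / (norm (F v) * Re \<mu>)"
  define p where "p = v + t *\<^sub>R vec_lambda \<omega>"
  have "norm (F p) = exp (K / norm (F v)) * norm (F v)"
    using \<open>Re \<mu> \<noteq> 0\<close> assms by (simp add: p_def flow norm_mult norm_exp_eq_Re t_def)
  also have "\<dots> \<ge> (1 + K / norm (F v)) * norm (F v)"
    by (intro mult_right_mono exp_ge_add_one_self) simp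
  also have "(1 + K / norm (F v)) * norm (F v) = norm (F v) + K"
    using assms by (simp add: field_simps)
  finally show False
    using K[of p] assms zero_less_norm_iff[of "F v"] by linarith
qed

text \<open>By Kronecker's theorem every orbit of the linear flow is dense modulo \<open>\<int>^d\<close>, and
  \<open>norm \<circ> F\<close> is constant on orbits.\<close>
lemma norm_constant:
  assumes "Re \<mu> = 0"
  shows "norm (F v) = norm (F u)"
proof (rule ccontr)
  assume "norm (F v) \<noteq> norm (F u)"
  then obtain \<delta> where "\<delta> > 0"
    and \<delta>: "\<And>y. dist y v < \<delta> \<Longrightarrow> dist (F y) (F v) < \<bar>norm (F v) - norm (F u)\<bar>"
    using continuous unfolding continuous_on_iff by (metis UNIV_I zero_less_abs_iff eq_iff_diff_eq_0)
  have "\<delta> / CARD('d) > 0"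
    using \<open>\<delta> > 0\<close> by simp
  then obtain t and h :: "'d \<Rightarrow> int"
    where th: "\<And>i. \<bar>t * \<omega> i - of_int (h i) - (v - u) $ i\<bar> < \<delta> / CARD('d)"
    using rat_indep_Kronecker[OF rat_indep, where \<alpha> = "\<lambda>i. (v - u) $ i"] by blast
  define p where "p = u + t *\<^sub>R vec_lambda \<omega> - (\<chi> i. of_int (h i))"
  have "F p = F (u + t *\<^sub>R vec_lambda \<omega>)"
    unfolding p_def diff_conv_add_uminus by (rule periodic) simp
  then have norm_p: "norm (F p) = norm (F u)"
    using assms by (simp add: flow norm_mult norm_exp_eq_Re)
  have "dist p v \<le> (\<Sum>i\<in>UNIV. \<bar>(p - v) $ i\<bar>)"
    unfolding dist_norm by (rule norm_le_l1_cart)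
  also have "\<dots> < (\<Sum>i\<in>(UNIV :: 'd set). \<delta> / CARD('d))"
    using th by (intro sum_strict_mono) (simp_all add: p_def algebra_simps)
  also have "\<dots> = \<delta>"
    by simp
  finally have "dist (F p) (F v) < \<bar>norm (F v) - norm (F u)\<bar>"
    by (rule \<delta>)
  then show False
    using norm_triangle_ineq3[of "F p" "F v"] norm_p by (simp add: dist_norm)
qed

context
  fixes H :: "real^'d \<Rightarrow> complex"
  assumes H: "continuous_on UNIV H" and F_exp_H: "\<And>v. F v = exp (H v)"
begin

lemma logarithm_axis_shift: "H (v + axis i 1) = H v + (H (axis i 1) - H 0)"
proof -
  let ?g = "\<lambda>v. H (v + axis i 1) - H v - (H (axis i 1) - H 0)"
  have "continuous_on UNIV ?g"
    by (intro continuous_intros H continuous_on_compose2[OF H]) auto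
  moreover have "exp (?g v) = 1" for v
    using periodic_axis[of v i] periodic_axis[of 0 i] by (simp add: exp_diff F_exp_H)
  ultimately have "?g v = 0"
    by (rule continuous_exp_eq_1_imp_eq_0) simp
  then show ?thesis
    by (simp add: algebra_simps)
qed

lemma logarithm_flow: "H (t *\<^sub>R vec_lambda \<omega>) = H 0 + \<mu> * of_real t"
proof -
  let ?g = "\<lambda>t. H (t *\<^sub>R vec_lambda \<omega>) - H 0 - \<mu> * of_real t"
  have "continuous_on UNIV ?g"
    by (intro continuous_intros continuous_on_compose2[OF H]) auto
  moreover have "exp (?g t) = 1" for t
    using flow[of 0 t] by (simp add: exp_diff F_exp_H)
  ultimately have "?g t = 0"
    by (rule continuous_exp_eq_1_imp_eq_0) simp
  then show ?thesis
    by (simp add: algebra_simps)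
qed

end

text \<open>Writing \<open>F = exp \<circ> H\<close>, the function \<open>H v - \<Sum>\<^sub>i a\<^sub>i v\<^sub>i\<close> with
  \<open>a\<^sub>i = H (e\<^sub>i) - H 0 \<in> 2\<pi>i\<int>\<close> is periodic, hence bounded, but grows like
  \<open>(\<mu> - \<Sum>\<^sub>i a\<^sub>i \<omega>\<^sub>i) t\<close> along the flow.\<close>
theorem eigenvalue_in_Mset:
  assumes "F v\<^sub>0 \<noteq> 0"
  shows "\<mu> \<in> Mset \<omega>"
proof -
  have "F v \<noteq> 0" for v
    using norm_constant[OF Re_eq_0[OF assms], of v v\<^sub>0] assms by auto
  then obtain H where H: "continuous_on UNIV H" and F_exp_H: "\<And>v. F v = exp (H v)"
    using continuous_logarithm_on_contractible[OF continuous contractible_UNIV] by (metis UNIV_I)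
  define a where "a = (\<lambda>i. H (axis i 1) - H 0)"
  define G where "G = (\<lambda>v. H v - (\<Sum>i\<in>UNIV. a i * of_real (v $ i)))"
  have "continuous_on UNIV G"
    unfolding G_def by (intro continuous_intros H)
  moreover have "G (v + axis j 1) = G v" for v j
  proof -
    have "a i * of_real ((v + axis j 1) $ i) = a i * of_real (v $ i) + (if i = j then a j else 0)" for i
      by (simp add: axis_def distrib_left)
    then show ?thesis
      using logarithm_axis_shift[OF H F_exp_H, of v j] by (simp add: G_def a_def sum.distrib)
  qed
  ultimately obtain K where K: "\<And>v. norm (G v) \<le> K"
    using periodic_bounded periodic_Ints_if_periodic_axis by metis
  define s where "s = (\<Sum>i\<in>UNIV. a i * of_real (\<omega> i))"
  have G_flow: "G (t *\<^sub>R vec_lambda \<omega>) - G 0 = t *\<^sub>R (\<mu> - s)" for t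
    using logarithm_flow[OF H F_exp_H, of t]
    by (simp add: G_def s_def sum_distrib_left scaleR_conv_of_real[where 'a = complex] algebra_simps)
  have "norm (t *\<^sub>R (\<mu> - s)) \<le> K + K" for t
    unfolding G_flow[symmetric] using K norm_triangle_ineq4 add_mono order_trans by metis
  then have "\<mu> - s = 0"
    by (rule bounded_ray_eq_0)
  moreover have "exp (a i) = 1" for i
    using periodic_axis[of 0 i] by (simp add: a_def exp_diff F_exp_H)
  ultimately show ?thesis
    using sum_in_Mset_if_exp_eq_1[of a \<omega>] by (simp add: s_def)
qed

end

lemma eigenvalue_in_Mset_torus:
  fixes \<omega> :: "'d::finite \<Rightarrow> real" and f :: "('d \<Rightarrow> real) \<Rightarrow> complex"
  assumes "rat_indep \<omega>" and cont: "continuous_on UNIV f"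
    and per: "\<And>\<theta> (k::'d \<Rightarrow> int). f (\<lambda>i. \<theta> i + of_int (k i)) = f \<theta>"
    and deriv: "\<And>\<theta>. ((\<lambda>t. f (\<lambda>i. \<theta> i + t * \<omega> i)) has_vector_derivative \<mu> * f \<theta>) (at 0)"
    and "f \<theta>\<^sub>0 \<noteq> 0"
  shows "\<mu> \<in> Mset \<omega>"
proof -
  interpret torus_eigenfunction \<omega> "\<lambda>v. f (vec_nth v)" \<mu>
  proof
    show "rat_indep \<omega>"
      by fact
    show "continuous_on UNIV (\<lambda>v. f (vec_nth v))"
    proof (rule continuous_on_compose2[OF cont])
      show "continuous_on UNIV (\<lambda>v::real^'d. \<lambda>i. v $ i)"
        by (rule continuous_on_coordinatewise_then_product) (intro continuous_on_component continuous_on_id)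
    qed auto
    show "f (vec_nth (v + z)) = f (vec_nth v)" if "\<And>i. z $ i \<in> \<int>" for v z
    proof -
      have "vec_nth (v + z) = (\<lambda>i. v $ i + of_int \<lfloor>z $ i\<rfloor>)"
        using that by (auto simp: fun_eq_iff elim: Ints_cases)
      then show ?thesis
        by (simp add: per)
    qed
    show "((\<lambda>t. f (vec_nth (v + t *\<^sub>R vec_lambda \<omega>))) has_vector_derivative \<mu> * f (vec_nth v)) (at 0)" for v
    proof -
      have "vec_nth (v + t *\<^sub>R vec_lambda \<omega>) = (\<lambda>i. v $ i + t * \<omega> i)" for t
        by (simp add: fun_eq_iff)
      then show ?thesis
        using deriv[of "vec_nth v"] by simp
    qed
  qed
  show ?thesis
    by (rule eigenvalue_in_Mset[of "vec_lambda \<theta>\<^sub>0"]) (simp add: vec_lambda_inverse \<open>f \<theta>\<^sub>0 \<noteq> 0\<close>)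
qed

section \<open>Linked numbers and chains\<close>

lemma zero_in_Mset: "0 \<in> Mset \<omega>"
  unfolding Mset_def by (auto intro!: exI[of _ "\<lambda>_. 0"])

lemma Mset_add:
  assumes "a \<in> Mset \<omega>" and "b \<in> Mset \<omega>"
  shows "a + b \<in> Mset \<omega>"
proof -
  obtain k l where "a = 2 * \<i> * of_real pi * of_real (\<Sum>i\<in>UNIV. of_int (k i) * \<omega> i)"
    and "b = 2 * \<i> * of_real pi * of_real (\<Sum>i\<in>UNIV. of_int (l i) * \<omega> i)"
    using assms unfolding Mset_def by blast
  then have "a + b = 2 * \<i> * of_real pi * of_real (\<Sum>i\<in>UNIV. of_int (k i + l i) * \<omega> i)"
    by (simp add: sum.distrib algebra_simps)
  then show ?thesis
    unfolding Mset_def by (intro CollectI exI[of _ "\<lambda>i. k i + l i"]) simp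
qed

lemma Mset_uminus:
  assumes "a \<in> Mset \<omega>"
  shows "- a \<in> Mset \<omega>"
proof -
  obtain k where "a = 2 * \<i> * of_real pi * of_real (\<Sum>i\<in>UNIV. of_int (k i) * \<omega> i)"
    using assms unfolding Mset_def by blast
  then have "- a = 2 * \<i> * of_real pi * of_real (\<Sum>i\<in>UNIV. of_int (- k i) * \<omega> i)"
    by (simp add: sum_negf)
  then show ?thesis
    unfolding Mset_def by (intro CollectI exI[of _ "\<lambda>i. - k i"]) simp
qed

lemma Mset_diff: "a \<in> Mset \<omega> \<Longrightarrow> b \<in> Mset \<omega> \<Longrightarrow> a - b \<in> Mset \<omega>"
  using Mset_add[of a \<omega> "- b"] Mset_uminus[of b \<omega>] by simp

lemma Mset_diff_commute: "a - b \<in> Mset \<omega> \<Longrightarrow> b - a \<in> Mset \<omega>"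
  using Mset_uminus[of "a - b" \<omega>] by simp

lemma cnj_Mset: "a \<in> Mset \<omega> \<Longrightarrow> cnj a = - a"
  unfolding Mset_def by (auto simp: complex_eq_iff)

lemma linked_sym: "linked \<omega> a b \<Longrightarrow> linked \<omega> b a"
  unfolding linked_def by (metis cnj_Mset complex_cnj_cnj complex_cnj_diff minus_diff_eq)

lemma linked_linked_imp_Mset: "linked \<omega> a b \<Longrightarrow> linked \<omega> b c \<Longrightarrow> a - c \<in> Mset \<omega>"
  using Mset_diff[of "a - cnj b" \<omega> "c - cnj b"] linked_sym[of \<omega> b c]
  unfolding linked_def by simp

lemma Mset_linked_imp_linked: "a - b \<in> Mset \<omega> \<Longrightarrow> linked \<omega> b c \<Longrightarrow> linked \<omega> a c"
  using Mset_add[of "a - b" \<omega> "b - cnj c"] unfolding linked_def by simp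

lemma chain_class_parity:
  assumes "b \<in> chain_class \<omega> B \<alpha>"
  shows "\<alpha> - b \<in> Mset \<omega> \<or> linked \<omega> \<alpha> b"
proof -
  obtain xs where chain: "is_chain \<omega> xs" and "hd xs = \<alpha>" "last xs = b"
    using assms unfolding chain_class_def chain_linked_def by blast
  have "hd xs - xs ! j \<in> Mset \<omega> \<or> linked \<omega> (hd xs) (xs ! j)" if "j < length xs" for j
    using that
  proof (induction j)
    case 0
    then show ?case
      by (simp add: hd_conv_nth zero_in_Mset)
  next
    case (Suc j)
    then have "linked \<omega> (xs ! j) (xs ! Suc j)"
      using chain unfolding is_chain_def by blast
    with Suc show ?case
      using Mset_linked_imp_linked linked_linked_imp_Mset by auto
  qed
  moreover have "length xs - 1 < length xs" and "xs ! (length xs - 1) = b"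
    using chain \<open>last xs = b\<close> by (auto simp: is_chain_def last_conv_nth)
  ultimately show ?thesis
    using \<open>hd xs = \<alpha>\<close> by metis
qed

lemma is_chain_snoc:
  assumes "is_chain \<omega> xs" and "linked \<omega> (last xs) y"
  shows "is_chain \<omega> (xs @ [y])"
  unfolding is_chain_def
proof (intro conjI allI impI)
  fix j assume "Suc j < length (xs @ [y])"
  then consider "Suc j < length xs" | "Suc j = length xs"
    by fastforce
  then show "linked \<omega> ((xs @ [y]) ! j) ((xs @ [y]) ! Suc j)"
  proof cases
    case 1
    then show ?thesis
      using assms(1) by (simp add: is_chain_def nth_append)
  next
    case 2
    then show ?thesis
      using assms 2[symmetric] by (simp add: is_chain_def nth_append last_conv_nth)
  qed
qed simp

lemma chain_class_closed:
  assumes "b \<in> chain_class \<omega> B \<alpha>" and "c \<in> spectrum B" and "linked \<omega> b c"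
  shows "c \<in> chain_class \<omega> B \<alpha>"
proof -
  obtain xs where xs: "is_chain \<omega> xs" "set xs \<subseteq> spectrum B" "hd xs = \<alpha>" "last xs = b"
    using assms(1) unfolding chain_class_def chain_linked_def by blast
  have "is_chain \<omega> (xs @ [c])"
    using is_chain_snoc[OF xs(1)] assms(3) xs(4) by simp
  moreover have "hd (xs @ [c]) = \<alpha>"
    using xs(1,3) by (simp add: is_chain_def)
  moreover have "set (xs @ [c]) \<subseteq> spectrum B"
    using xs(2) assms(2) by simp
  ultimately have "chain_linked \<omega> (spectrum B) \<alpha> c"
    unfolding chain_linked_def by (intro exI[of _ "xs @ [c]"]) simp
  then show ?thesis
    using assms(2) by (simp add: chain_class_def)
qed

section \<open>Triangular, Jordan and invertible matrices\<close>

lemma jordan_matrix_nonzero_entry_diag_eq: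
  assumes "i < sum_list (map fst n_as)" and "k < sum_list (map fst n_as)"
    and "jordan_matrix n_as $$ (i,k) \<noteq> 0"
  shows "jordan_matrix n_as $$ (k,k) = jordan_matrix n_as $$ (i,i)"
  using assms
proof (induction n_as arbitrary: i k)
  case (Cons na n_as)
  obtain n a where na: "na = (n,a)"
    by force
  let ?N = "sum_list (map fst n_as)"
  have entry: "jordan_matrix (na # n_as) $$ (x,y) =
      (if x < n then if y < n then jordan_block n a $$ (x,y) else 0
       else if y < n then 0 else jordan_matrix n_as $$ (x - n, y - n))"
    if "x < n + ?N" "y < n + ?N" for x y
    unfolding na jordan_matrix_Cons using that
    by (subst index_mat_four_block) (auto simp: jordan_block_def)
  have lt: "i < n + ?N" "k < n + ?N"
    using Cons.prems(1,2) by (auto simp: na)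
  show ?case
  proof (cases "i < n")
    case True
    show ?thesis
    proof (cases "k < n")
      case True
      with \<open>i < n\<close> show ?thesis
        using entry[OF lt(2) lt(2)] entry[OF lt(1) lt(1)] by (simp add: jordan_block_def)
    next
      case False
      with \<open>i < n\<close> show ?thesis
        using entry[OF lt(1) lt(2)] Cons.prems(3) by simp
    qed
  next
    case False
    show ?thesis
    proof (cases "k < n")
      case True
      with \<open>\<not> i < n\<close> show ?thesis
        using entry[OF lt(1) lt(2)] Cons.prems(3) by simp
    next
      case False
      have "jordan_matrix n_as $$ (k - n, k - n) = jordan_matrix n_as $$ (i - n, i - n)"
        using Cons.IH[of "i - n" "k - n"] lt Cons.prems(3) entry[OF lt(1) lt(2)] \<open>\<not> i < n\<close> False
        by simp
      then show ?thesis
        using entry[OF lt(2) lt(2)] entry[OF lt(1) lt(1)] \<open>\<not> i < n\<close> False by simp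
    qed
  qed
qed simp

lemma in_jordan_nf_upper_triangular: "in_jordan_nf B \<Longrightarrow> upper_triangular B"
  unfolding in_jordan_nf_def upper_triangular_def using jordan_matrix_upper_triangular by auto

lemma in_jordan_nf_nonzero_entry_diag_eq:
  assumes "in_jordan_nf B" and "i < dim_row B" and "k < dim_row B" and "B $$ (i,k) \<noteq> 0"
  shows "B $$ (k,k) = B $$ (i,i)"
proof -
  obtain n_as where "B = jordan_matrix n_as"
    using assms(1) unfolding in_jordan_nf_def by blast
  then show ?thesis
    using assms(2-4) jordan_matrix_nonzero_entry_diag_eq[of i n_as k] by simp
qed

lemma spectrum_upper_triangular:
  assumes "B \<in> carrier_mat n n" and "upper_triangular B"
  shows "spectrum B = (\<lambda>i. B $$ (i,i)) ` {..<n}"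
proof -
  have "eigenvalue B x \<longleftrightarrow> x \<in> set (diag_mat B)" for x
    unfolding eigenvalue_root_char_poly[OF assms(1)] char_poly_upper_triangular[OF assms]
    by (force simp: poly_prod_list prod_list_zero_iff)
  then show ?thesis
    using assms(1) by (auto simp: spectrum_def diag_mat_def)
qed

lemma alg_mult_upper_triangular:
  assumes "B \<in> carrier_mat n n" and "upper_triangular B"
  shows "alg_mult B a = card {i. i < n \<and> B $$ (i,i) = a}"
proof -
  have "alg_mult B a = order a (\<Prod>i\<leftarrow>[0..<n]. [:- B $$ (i,i), 1:])"
    using assms(1) unfolding alg_mult_def char_poly_upper_triangular[OF assms] diag_mat_def
    by (simp add: o_def)
  also have "\<dots> = (\<Sum>i\<leftarrow>[0..<n]. order a [:- B $$ (i,i), 1:])"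
    by (subst order_prod_list) (auto simp: o_def)
  also have "\<dots> = (\<Sum>i\<in>{0..<n}. if B $$ (i,i) = a then 1 else 0)"
    by (simp add: sum_set_upt_conv_sum_list_nat[symmetric] order_linear')
  also have "\<dots> = card {i. i < n \<and> B $$ (i,i) = a}"
    by (simp add: sum.inter_filter[symmetric])
  finally show ?thesis .
qed

lemma sum_alg_mult_upper_triangular:
  assumes "B \<in> carrier_mat n n" and "upper_triangular B" and "finite S"
  shows "(\<Sum>a\<in>S. alg_mult B a) = card {i. i < n \<and> B $$ (i,i) \<in> S}"
proof -
  have "(\<Sum>a\<in>S. alg_mult B a) = card (\<Union>a\<in>S. {i. i < n \<and> B $$ (i,i) = a})"
    using assms by (subst card_UN_disjoint) (auto simp: alg_mult_upper_triangular)
  also have "(\<Union>a\<in>S. {i. i < n \<and> B $$ (i,i) = a}) = {i. i < n \<and> B $$ (i,i) \<in> S}"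
    by auto
  finally show ?thesis .
qed

lemma det_nonzero_if_invertible_mat:
  fixes A :: "'a::comm_ring_1 mat"
  assumes "A \<in> carrier_mat n n" and "invertible_mat A"
  shows "det A \<noteq> 0"
proof -
  obtain V where AV: "A * V = 1\<^sub>m n" and VA: "V * A = 1\<^sub>m (dim_row V)"
    using assms unfolding invertible_mat_def inverts_mat_def by auto
  then have "V \<in> carrier_mat n n"
    using assms(1) by (metis carrier_matD carrier_matI index_mult_mat(2,3) index_one_mat(2,3))
  then have "det A * det V = 1"
    using det_mult[OF assms(1)] AV by (metis det_one)
  then show ?thesis
    by auto
qed

text \<open>Every term of the Leibniz expansion of \<open>det A\<close> contains a factor \<open>A $$ (i, p i)\<close> with
  \<open>i \<in> I\<close> and \<open>p i \<notin> J\<close>, since a permutation cannot map \<open>I\<close> into the smaller set \<open>J\<close>.\<close>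
lemma card_le_if_rows_supported:
  fixes A :: "'a::comm_ring_1 mat"
  assumes A: "A \<in> carrier_mat n n" "det A \<noteq> 0" and "I \<subseteq> {..<n}" and "J \<subseteq> {..<n}"
    and support: "\<And>i j. i \<in> I \<Longrightarrow> j < n \<Longrightarrow> A $$ (i,j) \<noteq> 0 \<Longrightarrow> j \<in> J"
  shows "card I \<le> card J"
proof (rule ccontr)
  assume "\<not> card I \<le> card J"
  have "(\<Prod>i = 0..<n. A $$ (i, p i)) = 0" if p: "p permutes {0..<n}" for p
  proof -
    have "card (p ` I) = card I"
      using permutes_inj[OF p] by (simp add: card_image inj_on_subset)
    then have "\<not> p ` I \<subseteq> J"
      using \<open>\<not> card I \<le> card J\<close> \<open>J \<subseteq> {..<n}\<close> by (metis card_mono finite_lessThan finite_subset)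
    then obtain i where "i \<in> I" and "p i \<notin> J"
      by blast
    moreover have "i < n" and "p i < n"
      using \<open>i \<in> I\<close> \<open>I \<subseteq> {..<n}\<close> permutes_in_image[OF p] by auto
    ultimately show ?thesis
      using support[of i "p i"] by (intro prod_zero bexI[of _ i]) auto
  qed
  then have "det A = 0"
    using A(1) unfolding det_def by simp
  with A(2) show False
    by contradiction
qed

lemma upper_triangular_mult_entry_left:
  assumes B: "B \<in> carrier_mat n n" "upper_triangular B" and X: "X \<in> carrier_mat n m"
    and "i < n" and "j < m"
    and vanish: "\<And>c. i < c \<Longrightarrow> c < n \<Longrightarrow> B $$ (i,c) \<noteq> 0 \<Longrightarrow> X $$ (c,j) = 0"
  shows "(B * X) $$ (i,j) = B $$ (i,i) * X $$ (i,j)"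
proof -
  have "B $$ (i,c) * X $$ (c,j) = 0" if "c < n" "c \<noteq> i" for c
  proof (cases "c < i")
    case True
    then show ?thesis
      using B \<open>i < n\<close> by (simp add: upper_triangularD)
  next
    case False
    then show ?thesis
      using vanish[of c] that by fastforce
  qed
  then have "(\<Sum>c\<in>{0..<n}. B $$ (i,c) * X $$ (c,j)) = (\<Sum>c\<in>{i}. B $$ (i,c) * X $$ (c,j))"
    using \<open>i < n\<close> by (intro sum.mono_neutral_right) auto
  then show ?thesis
    using assms by (simp add: scalar_prod_def)
qed

lemma upper_triangular_mult_entry_right:
  assumes B: "B \<in> carrier_mat n n" "upper_triangular B" and X: "X \<in> carrier_mat m n"
    and "i < m" and "j < n"
    and vanish: "\<And>c. c < j \<Longrightarrow> B $$ (c,j) \<noteq> 0 \<Longrightarrow> X $$ (i,c) = 0"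
  shows "(X * B) $$ (i,j) = X $$ (i,j) * B $$ (j,j)"
proof -
  have "X $$ (i,c) * B $$ (c,j) = 0" if "c < n" "c \<noteq> j" for c
  proof (cases "j < c")
    case True
    then show ?thesis
      using B that by (simp add: upper_triangularD)
  next
    case False
    then show ?thesis
      using vanish[of c] that by fastforce
  qed
  then have "(\<Sum>c\<in>{0..<n}. X $$ (i,c) * B $$ (c,j)) = (\<Sum>c\<in>{j}. X $$ (i,c) * B $$ (c,j))"
    using \<open>j < n\<close> by (intro sum.mono_neutral_right) auto
  then show ?thesis
    using assms by (simp add: scalar_prod_def)
qed

section \<open>Linked eigenvalues and the balanced partition\<close>

text \<open>Induction on \<open>n - i + j\<close>, i.e. starting from the lower left corner of \<open>U\<close>: if
  \<open>B $$ (i,i)\<close> and \<open>B $$ (j,j)\<close> are not linked, the induction hypothesis kills all other terms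
  of \<open>(B * U \<theta> - U \<theta> * map_mat cnj B) $$ (i,j)\<close>, so \<open>\<lambda>\<theta>. U \<theta> $$ (i,j)\<close> is an
  eigenfunction of \<open>\<partial>\<^sub>\<omega>\<close> with eigenvalue \<open>B $$ (i,i) - cnj (B $$ (j,j)) \<notin> Mset \<omega>\<close>.\<close>
lemma entry_nonzero_imp_linked:
  fixes \<omega> :: "'d::finite \<Rightarrow> real"
    and U :: "('d \<Rightarrow> real) \<Rightarrow> complex mat"
    and B :: "complex mat"
  assumes indep: "rat_indep \<omega>"
    and U_carrier: "\<And>\<theta>. U \<theta> \<in> carrier_mat n n"
    and U_periodic: "\<And>\<theta> (k::'d \<Rightarrow> int). U (\<lambda>i. \<theta> i + of_int (k i)) = U \<theta>"
    and U_cont: "\<And>i j. i < n \<Longrightarrow> j < n \<Longrightarrow> continuous_on UNIV (\<lambda>\<theta>. U \<theta> $$ (i, j))"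
    and B_carrier: "B \<in> carrier_mat n n"
    and B_triangular: "upper_triangular B"
    and B_blocks: "\<And>i k. i < n \<Longrightarrow> k < n \<Longrightarrow> B $$ (i,k) \<noteq> 0 \<Longrightarrow> B $$ (k,k) = B $$ (i,i)"
    and U_eq: "\<And>\<theta> i j. i < n \<Longrightarrow> j < n \<Longrightarrow>
       ((\<lambda>t::real. U (\<lambda>l. \<theta> l + t * \<omega> l) $$ (i, j)) has_vector_derivative
          ((B * U \<theta> - U \<theta> * map_mat cnj B) $$ (i, j))) (at 0)"
  shows "i < n \<Longrightarrow> j < n \<Longrightarrow> U \<theta> $$ (i,j) \<noteq> 0 \<Longrightarrow> linked \<omega> (B $$ (i,i)) (B $$ (j,j))"
proof (induction "n - i + j" arbitrary: i j \<theta> rule: less_induct)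
  case less
  show ?case
  proof (rule ccontr)
    assume not_linked: "\<not> linked \<omega> (B $$ (i,i)) (B $$ (j,j))"
    have left: "(B * U \<theta>') $$ (i,j) = B $$ (i,i) * U \<theta>' $$ (i,j)" for \<theta>'
    proof (rule upper_triangular_mult_entry_left[OF B_carrier B_triangular U_carrier less.prems(1,2)])
      fix c assume "i < c" "c < n" "B $$ (i,c) \<noteq> 0"
      then show "U \<theta>' $$ (c,j) = 0"
        using less.hyps[of c j \<theta>'] less.prems(2) not_linked B_blocks[of i c] by force
    qed
    have right: "(U \<theta>' * map_mat cnj B) $$ (i,j) = U \<theta>' $$ (i,j) * cnj (B $$ (j,j))" for \<theta>'
    proof -
      have "map_mat cnj B \<in> carrier_mat n n" and "upper_triangular (map_mat cnj B)"
        using B_triangular B_carrier by (auto simp: upper_triangular_def)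
      then have "(U \<theta>' * map_mat cnj B) $$ (i,j) = U \<theta>' $$ (i,j) * map_mat cnj B $$ (j,j)"
      proof (rule upper_triangular_mult_entry_right[OF _ _ U_carrier less.prems(1,2)])
        fix c assume "c < j" "map_mat cnj B $$ (c,j) \<noteq> 0"
        then show "U \<theta>' $$ (i,c) = 0"
          using less.hyps[of i c \<theta>'] less.prems not_linked B_blocks[of c j] B_carrier by force
      qed
      then show ?thesis
        using B_carrier less.prems by simp
    qed
    have "((\<lambda>t. U (\<lambda>l. \<theta>' l + t * \<omega> l) $$ (i,j)) has_vector_derivative
        (B $$ (i,i) - cnj (B $$ (j,j))) * U \<theta>' $$ (i,j)) (at 0)" for \<theta>'
      using U_eq[OF less.prems(1,2), of \<theta>'] U_carrier[of \<theta>'] B_carrier less.prems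
      by (simp add: left right algebra_simps)
    then have "B $$ (i,i) - cnj (B $$ (j,j)) \<in> Mset \<omega>"
      using eigenvalue_in_Mset_torus[OF indep U_cont[OF less.prems(1,2)]] U_periodic less.prems(3)
      by simp
    with not_linked show False
      unfolding linked_def by contradiction
  qed
qed

lemma eigenvalues_linked:
  fixes A B :: "complex mat"
  assumes A: "A \<in> carrier_mat n n" "det A \<noteq> 0"
    and B: "B \<in> carrier_mat n n" "upper_triangular B"
    and support: "\<And>i j. i < n \<Longrightarrow> j < n \<Longrightarrow> A $$ (i,j) \<noteq> 0 \<Longrightarrow> linked \<omega> (B $$ (i,i)) (B $$ (j,j))"
    and "x \<in> spectrum B"
  shows "\<exists>y \<in> spectrum B. linked \<omega> x y"
proof -
  obtain i where "i < n" and x: "x = B $$ (i,i)"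
    using \<open>x \<in> spectrum B\<close> spectrum_upper_triangular[OF B] by auto
  have "\<not> card {i} \<le> card ({} :: nat set)"
    by simp
  then obtain j where "j < n" and "A $$ (i,j) \<noteq> 0"
    using card_le_if_rows_supported[OF A, of "{i}" "{}"] \<open>i < n\<close> by blast
  then show ?thesis
    using support[OF \<open>i < n\<close>] x spectrum_upper_triangular[OF B] by blast
qed

text \<open>The chain class splits into the eigenvalues at even and at odd distance from \<open>\<alpha>\<close>; the
  rows of \<open>A\<close> belonging to one part are supported in the columns belonging to the other,
  and since \<open>A\<close> is invertible both parts occupy the same number of diagonal entries of \<open>B\<close>.\<close>
lemma balanced_partition:
  fixes A B :: "complex mat"
  assumes A: "A \<in> carrier_mat n n" "det A \<noteq> 0"
    and B: "B \<in> carrier_mat n n" "upper_triangular B"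
    and support: "\<And>i j. i < n \<Longrightarrow> j < n \<Longrightarrow> A $$ (i,j) \<noteq> 0 \<Longrightarrow> linked \<omega> (B $$ (i,i)) (B $$ (j,j))"
    and no_odd_loop: "\<not> (\<exists>xs. is_loop \<omega> xs \<and> set xs \<subseteq> chain_class \<omega> B \<alpha> \<and> odd (length xs - 1))"
  shows "\<exists>\<Sigma>1 \<Sigma>2. \<Sigma>1 \<union> \<Sigma>2 = chain_class \<omega> B \<alpha> \<and> \<Sigma>1 \<inter> \<Sigma>2 = {} \<and>
          (\<forall>a \<in> \<Sigma>1. \<forall>b \<in> \<Sigma>2. linked \<omega> a b) \<and>
          (\<Sum>a\<in>\<Sigma>1. alg_mult B a) = (\<Sum>b\<in>\<Sigma>2. alg_mult B b)"
proof -
  let ?C = "chain_class \<omega> B \<alpha>"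
  define Even where "Even = {b \<in> ?C. \<alpha> - b \<in> Mset \<omega>}"
  define Odd where "Odd = {b \<in> ?C. linked \<omega> \<alpha> b}"
  define rows where "rows S = {i. i < n \<and> B $$ (i,i) \<in> S}" for S
  have "\<not> linked \<omega> b b" if "b \<in> ?C" for b
    using no_odd_loop that by (auto simp: is_loop_def is_chain_def less_Suc_eq dest: spec[of _ "[b, b]"])
  then have "Even \<inter> Odd = {}"
    unfolding Even_def Odd_def using Mset_linked_imp_linked Mset_diff_commute by blast
  have diag_in_spectrum: "B $$ (j,j) \<in> spectrum B" if "j < n" for j
    using that spectrum_upper_triangular[OF B] by auto
  have "card (rows Even) \<le> card (rows Odd)"
  proof (rule card_le_if_rows_supported[OF A])
    fix i j assume "i \<in> rows Even" "j < n" "A $$ (i,j) \<noteq> 0"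
    then show "j \<in> rows Odd"
      using support chain_class_closed diag_in_spectrum Mset_linked_imp_linked
      unfolding rows_def Even_def Odd_def by blast
  qed (auto simp: rows_def)
  moreover have "card (rows Odd) \<le> card (rows Even)"
  proof (rule card_le_if_rows_supported[OF A])
    fix i j assume "i \<in> rows Odd" "j < n" "A $$ (i,j) \<noteq> 0"
    then show "j \<in> rows Even"
      using support chain_class_closed diag_in_spectrum linked_linked_imp_Mset
      unfolding rows_def Even_def Odd_def by blast
  qed (auto simp: rows_def)
  moreover have "finite ?C"
    using spectrum_upper_triangular[OF B] by (simp add: chain_class_def)
  ultimately have "(\<Sum>a\<in>Even. alg_mult B a) = (\<Sum>b\<in>Odd. alg_mult B b)"
    unfolding rows_def Even_def Odd_def by (simp add: sum_alg_mult_upper_triangular[OF B])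
  moreover have "Even \<union> Odd = ?C"
    using chain_class_parity unfolding Even_def Odd_def by blast
  moreover have "\<forall>a \<in> Even. \<forall>b \<in> Odd. linked \<omega> a b"
    unfolding Even_def Odd_def using Mset_linked_imp_linked Mset_diff_commute by blast
  ultimately show ?thesis
    using \<open>Even \<inter> Odd = {}\<close> by blast
qed

theorem lemma2:
  fixes \<omega> :: "'d::finite \<Rightarrow> real"
    and U :: "('d \<Rightarrow> real) \<Rightarrow> complex mat"
    and B :: "complex mat"
    and n :: nat
  assumes indep: "rat_indep \<omega>"
    and U_carrier: "\<And>\<theta>. U \<theta> \<in> carrier_mat n n"
    and U_inv: "\<And>\<theta>. invertible_mat (U \<theta>)"
    and U_periodic: "\<And>\<theta> (k::'d \<Rightarrow> int). U (\<lambda>i. \<theta> i + of_int (k i)) = U \<theta>"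
    and U_cont: "\<And>i j. i < n \<Longrightarrow> j < n \<Longrightarrow> continuous_on UNIV (\<lambda>\<theta>. U \<theta> $$ (i, j))"
    and B_carrier: "B \<in> carrier_mat n n"
    and B_jnf: "in_jordan_nf B"
    and U_eq: "\<And>\<theta> i j. i < n \<Longrightarrow> j < n \<Longrightarrow>
       ((\<lambda>t::real. U (\<lambda>l. \<theta> l + t * \<omega> l) $$ (i, j)) has_vector_derivative
          ((B * U \<theta> - U \<theta> * map_mat cnj B) $$ (i, j))) (at 0)"
  shows "(\<forall>x \<in> spectrum B. \<exists>y \<in> spectrum B. linked \<omega> x y) \<and>
    (\<forall>\<alpha> \<in> spectrum B.
       \<not> (\<exists>xs. is_loop \<omega> xs \<and> set xs \<subseteq> chain_class \<omega> B \<alpha> \<and> odd (length xs - 1)) \<longrightarrow>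
       (\<exists>\<Sigma>1 \<Sigma>2. \<Sigma>1 \<union> \<Sigma>2 = chain_class \<omega> B \<alpha> \<and> \<Sigma>1 \<inter> \<Sigma>2 = {} \<and>
          (\<forall>a \<in> \<Sigma>1. \<forall>b \<in> \<Sigma>2. linked \<omega> a b) \<and>
          (\<Sum>a\<in>\<Sigma>1. alg_mult B a) = (\<Sum>b\<in>\<Sigma>2. alg_mult B b)))"
proof -
  have B_triangular: "upper_triangular B"
    using B_jnf by (rule in_jordan_nf_upper_triangular)
  have B_blocks: "B $$ (k,k) = B $$ (i,i)" if "i < n" "k < n" "B $$ (i,k) \<noteq> 0" for i k
    using in_jordan_nf_nonzero_entry_diag_eq[OF B_jnf] that B_carrier by auto
  define A where "A = U (\<lambda>_. 0)"
  have A: "A \<in> carrier_mat n n" "det A \<noteq> 0"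
    unfolding A_def using U_carrier det_nonzero_if_invertible_mat[OF U_carrier U_inv] by auto
  have support: "linked \<omega> (B $$ (i,i)) (B $$ (j,j))" if "i < n" "j < n" "A $$ (i,j) \<noteq> 0" for i j
    using entry_nonzero_imp_linked[OF indep U_carrier U_periodic U_cont B_carrier B_triangular B_blocks U_eq]
      that unfolding A_def by blast
  show ?thesis
    using eigenvalues_linked[OF A B_carrier B_triangular support]
      balanced_partition[OF A B_carrier B_triangular support] by blast
qed

end
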